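(* For every message $M$ and all formulas $\phi,\psi$: $\vdash[M](\phi\to\psi)\to([M]\phi\to[M]\psi)$; $\vdash[M]\phi\to\langle M\rangle\phi$; $\vdash[M]\phi\to[M][M]\phi$; $\vdash\neg[M]\phi\to[M]\neg[M]\phi$; $\vdash[M]\big([M](\phi\vee\psi)\to([M]\phi\vee[M]\psi)\big)$; $\vdash\phi\to[M]\phi$; and if $\vdash\phi$ then $\vdash[M]\phi$. (That is, $[M]$ is a disjunctive KD45-modality of explicit belief of the agent $\mathsf{CM}$, with $\mathsf{CM}$ truth-believing.)
   Context: Fix a finite set $\mathcal{A}$ of agent names containing a distinguished name $\mathsf{CM}$. Messages: $M ::= a \mid B \mid (M,M)$ with $a\in\mathcal{A}$, $B$ optional application-specific data constants, $(M,M')$ pairs. $\mathcal{P}$ is a denumerable set of propositional variables containing atoms $\mathsf{k}_a(M)$ for all $a\in\mathcal{A}$ and messages $M$. Formulas: $\phi ::= P \mid \phi\wedge\phi \mid \phi\vee\phi \mid \neg\phi \mid \phi\to\phi \mid [M]\phi$. Abbreviations: $\mathrm{true}:=\mathsf{k}_{\mathsf{CM}}(\mathsf{CM})$, $\mathrm{false}:=\neg\mathrm{true}$, $\phi\leftrightarrow\psi:=(\phi\to\psi)\wedge(\psi\to\phi)$, $\langle M\rangle\phi:=\neg\neg(\mathsf{k}_{\mathsf{CM}}(M)\wedge\phi)$. LIiP is the smallest set of formulas that contains all instances of: the axioms of an adequate Hilbert axiomatization of intuitionistic propositional logic; $\mathsf{k}_a(a)$; $(\mathsf{k}_a(M)\wedge\mathsf{k}_a(M'))\leftrightarrow\mathsf{k}_a((M,M'))$;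 $[M]\mathsf{k}_{\mathsf{CM}}(M)$; $[M](\phi\to\psi)\to([M]\phi\to[M]\psi)$; $[M]\phi\to(\mathsf{k}_{\mathsf{CM}}(M)\to\phi)$; $[M]\phi\to\langle M\rangle\phi$; $\phi\to[M]\phi$; and is closed under modus ponens and the rule: if $\mathsf{k}_{\mathsf{CM}}(M)\to\mathsf{k}_{\mathsf{CM}}(M')$ is in the set then so is $[M']\phi\to[M]\phi$ for every $\phi$. Write $\vdash\phi$ for $\phi\in\mathrm{LIiP}$. *)

theory Defs
  imports Main
begin

datatype ('a, 'b) msg = Ag 'a | Dat 'b | MPair "('a,'b) msg" "('a,'b) msg"

(* Propositional variables: the atoms k_a(M), plus denumerably many further ones *)
datatype ('a, 'b) pvar = Know 'a "('a,'b) msg" | PV nat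

datatype ('a, 'b) form =
    Atom "('a,'b) pvar"
  | Conj "('a,'b) form" "('a,'b) form"
  | Disj "('a,'b) form" "('a,'b) form"
  | Neg "('a,'b) form"
  | Imp "('a,'b) form" "('a,'b) form"
  | Box "('a,'b) msg" "('a,'b) form"

definition kn :: "'a \<Rightarrow> ('a,'b) msg \<Rightarrow> ('a,'b) form" where
  "kn a M = Atom (Know a M)"

definition Iff :: "('a,'b) form \<Rightarrow> ('a,'b) form \<Rightarrow> ('a,'b) form" where
  "Iff p q = Conj (Imp p q) (Imp q p)"

(* <M> phi := not not (k_CM(M) and phi); cm is the distinguished agent CM *)
definition Dia :: "'a \<Rightarrow> ('a,'b) msg \<Rightarrow> ('a,'b) form \<Rightarrow> ('a,'b) form" where
  "Dia cm M p = Neg (Neg (Conj (kn cm M) p))"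

(* LIiP, parametrised by the distinguished agent name cm = CM.
   Intuitionistic propositional part: Kleene's Hilbert system (negation primitive). *)
inductive LIiP :: "'a \<Rightarrow> ('a,'b) form \<Rightarrow> bool" for cm :: 'a where
  ipc1: "LIiP cm (Imp p (Imp q p))"
| ipc2: "LIiP cm (Imp (Imp p q) (Imp (Imp p (Imp q r)) (Imp p r)))"
| ipc3: "LIiP cm (Imp p (Imp q (Conj p q)))"
| ipc4: "LIiP cm (Imp (Conj p q) p)"
| ipc5: "LIiP cm (Imp (Conj p q) q)"
| ipc6: "LIiP cm (Imp p (Disj p q))"
| ipc7: "LIiP cm (Imp q (Disj p q))"
| ipc8: "LIiP cm (Imp (Imp p r) (Imp (Imp q r) (Imp (Disj p q) r)))"
| ipc9: "LIiP cm (Imp (Imp p q) (Imp (Imp p (Neg q)) (Neg p)))"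
| ipc10: "LIiP cm (Imp (Neg p) (Imp p q))"
| self: "LIiP cm (kn a (Ag a))"
| pair: "LIiP cm (Iff (Conj (kn a M) (kn a M')) (kn a (MPair M M')))"
| box_self: "LIiP cm (Box M (kn cm M))"
| box_K: "LIiP cm (Imp (Box M (Imp p q)) (Imp (Box M p) (Box M q)))"
| box_T: "LIiP cm (Imp (Box M p) (Imp (kn cm M) p))"
| box_D: "LIiP cm (Imp (Box M p) (Dia cm M p))"
| box_triv: "LIiP cm (Imp p (Box M p))"
| mp: "LIiP cm (Imp p q) \<Longrightarrow> LIiP cm p \<Longrightarrow> LIiP cm q"
| epi: "LIiP cm (Imp (kn cm M) (kn cm M')) \<Longrightarrow> LIiP cm (Imp (Box M' p) (Box M p))"

end

theory Submission
  imports Defs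
begin

text \<open>Every clause except the disjunction property is an axiom or an instance of
\<open>\<phi> \<rightarrow> [M]\<phi>\<close>. For the disjunction property, \<open>\<phi> \<rightarrow> [M]\<phi>\<close> gives
\<open>\<phi> \<or> \<psi> \<rightarrow> [M]\<phi> \<or> [M]\<psi>\<close>, so by the truth axiom \<open>k\<^sub>C\<^sub>M(M) \<rightarrow> ([M](\<phi> \<or> \<psi>) \<rightarrow> [M]\<phi> \<or> [M]\<psi>)\<close>
is provable; necessitating and using \<open>[M]k\<^sub>C\<^sub>M(M)\<close> yields the claim.\<close>

lemma LIiP_imp_weaken: "LIiP cm q \<Longrightarrow> LIiP cm (Imp p q)"
  by (rule LIiP.mp[OF LIiP.ipc1])

lemma LIiP_imp_mp: "LIiP cm (Imp p (Imp q r)) \<Longrightarrow> LIiP cm (Imp p q) \<Longrightarrow> LIiP cm (Imp p r)"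
  by (rule LIiP.mp[OF LIiP.mp[OF LIiP.ipc2]])

lemma LIiP_imp_trans: "LIiP cm (Imp p q) \<Longrightarrow> LIiP cm (Imp q r) \<Longrightarrow> LIiP cm (Imp p r)"
  by (rule LIiP_imp_mp[OF LIiP_imp_weaken])

lemma LIiP_imp_mp_under:
  assumes "LIiP cm (Imp a (Imp p (Imp q r)))" and "LIiP cm (Imp a (Imp p q))"
  shows "LIiP cm (Imp a (Imp p r))"
proof -
  have "LIiP cm (Imp a (Imp (Imp p q) (Imp (Imp p (Imp q r)) (Imp p r))))"
    by (rule LIiP_imp_weaken[OF LIiP.ipc2])
  then have "LIiP cm (Imp a (Imp (Imp p (Imp q r)) (Imp p r)))"
    using assms(2) by (rule LIiP_imp_mp)
  then show ?thesis
    using assms(1) by (rule LIiP_imp_mp)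
qed

lemma LIiP_imp_swap: "LIiP cm (Imp p (Imp q r)) \<Longrightarrow> LIiP cm (Imp q (Imp p r))"
  by (rule LIiP_imp_mp_under[OF LIiP_imp_weaken LIiP.ipc1])

lemma LIiP_disj_elim:
  "LIiP cm (Imp p r) \<Longrightarrow> LIiP cm (Imp q r) \<Longrightarrow> LIiP cm (Imp (Disj p q) r)"
  by (rule LIiP.mp[OF LIiP.mp[OF LIiP.ipc8]])

lemma LIiP_necessitation: "LIiP cm \<phi> \<Longrightarrow> LIiP cm (Box M \<phi>)"
  by (rule LIiP.mp[OF LIiP.box_triv])

lemma LIiP_box_if_imp_known:
  assumes "LIiP cm (Imp (kn cm M) \<phi>)"
  shows "LIiP cm (Box M \<phi>)"
proof -
  have "LIiP cm (Box M (Imp (kn cm M) \<phi>))"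
    using assms by (rule LIiP_necessitation)
  then have "LIiP cm (Imp (Box M (kn cm M)) (Box M \<phi>))"
    by (rule LIiP.mp[OF LIiP.box_K])
  then show ?thesis
    by (rule LIiP.mp[OF _ LIiP.box_self])
qed

lemma LIiP_disj_imp_disj_box:
  "LIiP cm (Imp (Disj \<phi> \<psi>) (Disj (Box M \<phi>) (Box M \<psi>)))"
  by (rule LIiP_disj_elim[OF LIiP_imp_trans[OF LIiP.box_triv LIiP.ipc6]
                             LIiP_imp_trans[OF LIiP.box_triv LIiP.ipc7]])

lemma LIiP_box_disjunction_property:
  "LIiP cm (Box M (Imp (Box M (Disj \<phi> \<psi>)) (Disj (Box M \<phi>) (Box M \<psi>))))"
proof (rule LIiP_box_if_imp_known, rule LIiP_imp_swap)
  let ?X = "Disj (Box M \<phi>) (Box M \<psi>)"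
  have "LIiP cm (Imp (Box M (Disj \<phi> \<psi>)) (Imp (kn cm M) (Imp (Disj \<phi> \<psi>) ?X)))"
    by (rule LIiP_imp_weaken[OF LIiP_imp_weaken[OF LIiP_disj_imp_disj_box]])
  then show "LIiP cm (Imp (Box M (Disj \<phi> \<psi>)) (Imp (kn cm M) ?X))"
    by (rule LIiP_imp_mp_under[OF _ LIiP.box_T])
qed

theorem corollary5:
  fixes cm :: "'a::finite" and M :: "('a,'b) msg" and \<phi> \<psi> :: "('a,'b) form"
  shows "LIiP cm (Imp (Box M (Imp \<phi> \<psi>)) (Imp (Box M \<phi>) (Box M \<psi>)))
       \<and> LIiP cm (Imp (Box M \<phi>) (Dia cm M \<phi>))
       \<and> LIiP cm (Imp (Box M \<phi>) (Box M (Box M \<phi>)))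
       \<and> LIiP cm (Imp (Neg (Box M \<phi>)) (Box M (Neg (Box M \<phi>))))
       \<and> LIiP cm (Box M (Imp (Box M (Disj \<phi> \<psi>)) (Disj (Box M \<phi>) (Box M \<psi>))))
       \<and> LIiP cm (Imp \<phi> (Box M \<phi>))
       \<and> (LIiP cm \<phi> \<longrightarrow> LIiP cm (Box M \<phi>))"
  by (intro conjI impI LIiP.box_K LIiP.box_D LIiP.box_triv LIiP_box_disjunction_property)
     (rule LIiP_necessitation)

end
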